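(* Let $m\in\{1,2,3\}$, $H=L^2([0,2\pi]^m)$, $\Delta$ the realization of the Laplacian with periodic boundary conditions in $H$, with orthonormal eigenbasis $\{e_k\}$, $\Delta e_k=-\lambda_ke_k$, $\lambda_k\approx k^{2/m}$, and let $\beta,\gamma\ge0$, $\theta\in(0,1)$. Set $Q_t=\frac12(-\Delta)^{-(\beta+\gamma)}(I-e^{-2t(-\Delta)^\beta})$, $P_n$ the orthogonal projection onto $H_n=\mathrm{span}\{e_1,\dots,e_n\}$. Then: (1) if $(m-2\gamma)/(2\beta)<1$, there exists $\eta>0$ such that $\int_0^ts^{-\eta}\mathrm{Trace}_H[e^{-2s(-\Delta)^\beta}(-\Delta)^{-\gamma}]ds<+\infty$ for every $t>0$; (2) there exists $c>0$ such that for every $n\in\mathbb N$ and $t>0$, $\Gamma_{t,n}:=\|P_nQ_t^{-1/2}e^{-t(-\Delta)^\beta}P_n\|_{\mathcal L(H)}\le\Gamma_t:=\|Q_t^{-1/2}e^{-t(-\Delta)^\beta}\|_{\mathcal L(H)}\le c\,t^{-1/2-\gamma/(2\beta)}$; (3) if $(m-2\beta)/2<\gamma<\beta\theta/(2-\theta)$, then, for $A=-(-\Delta)^\beta$, $U=H$, $G=(-\Delta)^{-\gamma/2}$, any bounded $\theta$-Hölder $B:H\to H$ and the subspaces $H_n$, the following hold: there is $\eta\in(0,1)$ with $\int_0^ts^{-\eta}\mathrm{Trace}_H[e^{sA}GG^*e^{sA^*}]ds<\infty$ for all $t>0$; $H_n\subseteq D(A)$, $H_n\subseteq H_{n+1}$,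 $\bigcup H_n$ dense, $A(H_{n+1}\setminus H_n)\subseteq(H_{n+1}\setminus H_n)\cup\{0\}$; with $A_n=AP_n$, $G_n=P_nG$, $Q_{t,n}=\int_0^te^{sA_n}G_nG_n^*e^{sA_n^*}ds$ has trivial kernel for all $t>0,n$; and $\sup_n\int_0^t\|Q_{s,n}^{-1/2}e^{sA_n}\|^{2-\theta}_{\mathcal L(H)}ds<\infty$ for all $t>0$.
   Context: $A=-(-\Delta)^\beta$ generates an analytic semigroup $e^{-t(-\Delta)^\beta}$ on $H$; note $Q_{t,n}=P_nQ_tP_n$. *)

theory Defs
  imports "HOL-Analysis.Analysis"
begin

text \<open>The Hilbert space H is represented through the orthonormal eigenbasis (e_k) of the
  Laplacian: an element of H is identified with its coefficient sequence
  (0-indexed: e_0, e_1, ...), i.e. H is identified with l^2(nat).  All operators of the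
  statement are diagonal in this basis and are written via their symbols.\<close>

type_synonym seq = "nat \<Rightarrow> real"

definition ell2 :: "seq set" where
  "ell2 = {x. summable (\<lambda>k. (x k)\<^sup>2)}"

definition l2norm :: "seq \<Rightarrow> real" where
  "l2norm x = sqrt (\<Sum>k. (x k)\<^sup>2)"

definition l2normE :: "seq \<Rightarrow> ennreal" where
  "l2normE x = (if x \<in> ell2 then ennreal (l2norm x) else top)"

definition opnorm :: "(seq \<Rightarrow> seq) \<Rightarrow> ennreal" where
  "opnorm T = (SUP x\<in>{x\<in>ell2. l2norm x \<le> 1}. l2normE (T x))"

definition unitvec :: "nat \<Rightarrow> seq" where
  "unitvec k = (\<lambda>j. if j = k then 1 else 0)"

definition traceE :: "(seq \<Rightarrow> seq) \<Rightarrow> ennreal" where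
  "traceE T = (\<Sum>k. ennreal (T (unitvec k) k))"

definition diag :: "seq \<Rightarrow> seq \<Rightarrow> seq" where
  "diag d x = (\<lambda>k. d k * x k)"

definition proj :: "nat \<Rightarrow> seq \<Rightarrow> seq" where
  "proj n x = (\<lambda>k. if k < n then x k else 0)"

definition Hn :: "nat \<Rightarrow> seq set" where
  "Hn n = {x \<in> ell2. \<forall>k\<ge>n. x k = 0}"

text \<open>(-Delta)^a, with Delta e_k = - lam k e_k.\<close>
definition negLapPow :: "seq \<Rightarrow> real \<Rightarrow> seq \<Rightarrow> seq" where
  "negLapPow lam a = diag (\<lambda>k. lam k powr a)"

definition opA :: "seq \<Rightarrow> real \<Rightarrow> seq \<Rightarrow> seq" where
  "opA lam \<beta> = diag (\<lambda>k. - (lam k powr \<beta>))"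

definition domA :: "seq \<Rightarrow> real \<Rightarrow> seq set" where
  "domA lam \<beta> = {x \<in> ell2. opA lam \<beta> x \<in> ell2}"

definition semigrp :: "seq \<Rightarrow> real \<Rightarrow> real \<Rightarrow> seq \<Rightarrow> seq" where
  "semigrp lam \<beta> s = diag (\<lambda>k. exp (- s * lam k powr \<beta>))"

definition Qsymb :: "seq \<Rightarrow> real \<Rightarrow> real \<Rightarrow> real \<Rightarrow> seq" where
  "Qsymb lam \<beta> \<gamma> t = (\<lambda>k. 1/2 * lam k powr (-(\<beta>+\<gamma>)) * (1 - exp (-2 * t * lam k powr \<beta>)))"

definition Qt :: "seq \<Rightarrow> real \<Rightarrow> real \<Rightarrow> real \<Rightarrow> seq \<Rightarrow> seq" where
  "Qt lam \<beta> \<gamma> t = diag (Qsymb lam \<beta> \<gamma> t)"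

definition Qt_invsqrt :: "seq \<Rightarrow> real \<Rightarrow> real \<Rightarrow> real \<Rightarrow> seq \<Rightarrow> seq" where
  "Qt_invsqrt lam \<beta> \<gamma> t = diag (\<lambda>k. Qsymb lam \<beta> \<gamma> t k powr (-1/2))"

text \<open>e^{sA_n} for A_n = A P_n (A_n vanishes on the complement of H_n).\<close>
definition semigrp_n :: "seq \<Rightarrow> real \<Rightarrow> nat \<Rightarrow> real \<Rightarrow> seq \<Rightarrow> seq" where
  "semigrp_n lam \<beta> n s = diag (\<lambda>k. if k < n then exp (- s * lam k powr \<beta>) else 1)"

definition opG :: "seq \<Rightarrow> real \<Rightarrow> seq \<Rightarrow> seq" where
  "opG lam \<gamma> = negLapPow lam (-\<gamma>/2)"

definition opGn :: "seq \<Rightarrow> real \<Rightarrow> nat \<Rightarrow> seq \<Rightarrow> seq" where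
  "opGn lam \<gamma> n = proj n \<circ> opG lam \<gamma>"

definition opGn_adj :: "seq \<Rightarrow> real \<Rightarrow> nat \<Rightarrow> seq \<Rightarrow> seq" where
  "opGn_adj lam \<gamma> n = opG lam \<gamma> \<circ> proj n"

text \<open>Q_{t,n} = int_0^t e^{sA_n} G_n G_n^* e^{sA_n^*} ds (weak/coordinatewise integral;
  e^{sA_n} is self-adjoint).\<close>
definition Qtn :: "seq \<Rightarrow> real \<Rightarrow> real \<Rightarrow> nat \<Rightarrow> real \<Rightarrow> seq \<Rightarrow> seq" where
  "Qtn lam \<beta> \<gamma> n t x = (\<lambda>k. integral {0..t}
     (\<lambda>s. (semigrp_n lam \<beta> n s \<circ> opGn lam \<gamma> n \<circ> opGn_adj lam \<gamma> n \<circ> semigrp_n lam \<beta> n s) x k))"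

text \<open>Q_{t,n}^{-1/2}, understood as the inverse square root of Q_{t,n} on H_n
  (Q_{t,n} is diagonal), extended by 0 on the orthogonal complement of H_n.\<close>
definition Qtn_invsqrt :: "seq \<Rightarrow> real \<Rightarrow> real \<Rightarrow> nat \<Rightarrow> real \<Rightarrow> seq \<Rightarrow> seq" where
  "Qtn_invsqrt lam \<beta> \<gamma> n t =
     diag (\<lambda>k. if k < n then (Qtn lam \<beta> \<gamma> n t (unitvec k) k) powr (-1/2) else 0)"

definition ennpowr :: "ennreal \<Rightarrow> real \<Rightarrow> ennreal" where
  "ennpowr x p = (if x = top then top else ennreal (enn2real x powr p))"

end

theory Submission
  imports Defs
begin

text \<open>All operators are diagonal in the eigenbasis, so each claim is an estimate on eigenvalue
  symbols. In the trace integral, exp(-y) \<le> y^(-p) for 0 \<le> p \<le> 1 trades the time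
  singularity s^(-p) for the decay \<lambda>_k^(-\<beta>p); once \<gamma> + \<beta>p > m/2 the eigenvalue sum
  converges by Weyl's law, and p < 1 leaves an integrable weight. The squared symbol of
  Q_t^(-1/2) e^(tA) is 2 t^(-b) x^b / (exp(2x) - 1) with b = 1 + \<gamma>/\<beta> and x = t \<lambda>^\<beta>,
  hence at most 2K t^(-b) by x^b \<le> K (exp(2x) - 1). The Galerkin covariance Q_{t,n} is just
  P_n Q_t, so the bound is uniform in n, and its (2 - \<theta>)-th power is integrable at 0
  precisely when \<gamma> < \<beta>\<theta>/(2 - \<theta>).\<close>

lemma diag_comp: "diag a \<circ> diag b = diag (\<lambda>k. a k * b k)"
  by (auto simp: diag_def fun_eq_iff)

lemma ell2_l2norm_le_pointwise:
  assumes x: "x \<in> ell2" and M: "M \<ge> 0" and le: "\<And>k. \<bar>y k\<bar> \<le> M * \<bar>x k\<bar>"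
  shows "y \<in> ell2" and "l2norm y \<le> M * l2norm x"
proof -
  have sx: "summable (\<lambda>k. (x k)\<^sup>2)" using x by (simp add: ell2_def)
  have sq_le: "(y k)\<^sup>2 \<le> M\<^sup>2 * (x k)\<^sup>2" for k
    using power_mono[OF le[of k], of 2] by (simp add: power_mult_distrib)
  have sy: "summable (\<lambda>k. (y k)\<^sup>2)"
    by (rule summable_comparison_test[OF _ summable_mult[OF sx, of "M\<^sup>2"]]) (use sq_le in auto)
  then show "y \<in> ell2" by (simp add: ell2_def)
  have "(\<Sum>k. (y k)\<^sup>2) \<le> M\<^sup>2 * (\<Sum>k. (x k)\<^sup>2)"
    using suminf_le[OF sq_le sy summable_mult[OF sx]] sx by (simp add: suminf_mult)
  then have "sqrt (\<Sum>k. (y k)\<^sup>2) \<le> sqrt (M\<^sup>2) * sqrt (\<Sum>k. (x k)\<^sup>2)"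
    by (metis real_sqrt_le_mono real_sqrt_mult)
  then show "l2norm y \<le> M * l2norm x" using M by (simp add: l2norm_def)
qed

lemma opnorm_diag_le:
  assumes M: "M \<ge> 0" and d: "\<And>k. \<bar>d k\<bar> \<le> M"
  shows "opnorm (diag d) \<le> ennreal M"
  unfolding opnorm_def
proof (rule SUP_least)
  fix x assume x: "x \<in> {x \<in> ell2. l2norm x \<le> 1}"
  have le: "\<bar>diag d x k\<bar> \<le> M * \<bar>x k\<bar>" for k
    using mult_right_mono[OF d[of k] abs_ge_zero[of "x k"]] by (simp add: diag_def abs_mult)
  have "l2norm (diag d x) \<le> M * l2norm x"
    using ell2_l2norm_le_pointwise(2)[of x M "diag d x"] x M le by simp
  also have "\<dots> \<le> M" using x M mult_left_le by auto
  finally show "l2normE (diag d x) \<le> ennreal M"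
    using ell2_l2norm_le_pointwise(1)[of x M "diag d x"] x M le
    by (simp add: l2normE_def ennreal_leI)
qed

lemma opnorm_compress_le: "opnorm (proj n \<circ> T \<circ> proj n) \<le> opnorm T"
  unfolding opnorm_def
proof (rule SUP_least)
  have proj_le: "\<bar>proj n z k\<bar> \<le> 1 * \<bar>z k\<bar>" for z k
    by (simp add: proj_def)
  fix x assume x: "x \<in> {x \<in> ell2. l2norm x \<le> 1}"
  then have "proj n x \<in> {x \<in> ell2. l2norm x \<le> 1}"
    using ell2_l2norm_le_pointwise[of x 1 "proj n x"] proj_le by force
  then have "l2normE (T (proj n x)) \<le> (SUP x\<in>{x\<in>ell2. l2norm x \<le> 1}. l2normE (T x))"
    by (rule SUP_upper)
  moreover have "l2normE (proj n z) \<le> l2normE z" for z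
    using ell2_l2norm_le_pointwise[of z 1 "proj n z"] proj_le
    by (simp add: l2normE_def ennreal_leI)
  ultimately show "l2normE ((proj n \<circ> T \<circ> proj n) x) \<le> (SUP x\<in>{x\<in>ell2. l2norm x \<le> 1}. l2normE (T x))"
    using order_trans by fastforce
qed

lemma ennpowr_le_ennreal:
  assumes "X \<le> ennreal Y" "Y \<ge> 0" "p \<ge> 0"
  shows "ennpowr X p \<le> ennreal (Y powr p)"
proof -
  have "X \<noteq> top" using assms(1) by (auto simp: top_unique)
  moreover have "enn2real X \<le> Y"
    using enn2real_mono[OF assms(1)] assms(2) by simp
  ultimately show ?thesis
    using assms(3) by (simp add: ennpowr_def ennreal_leI powr_mono2)
qed

lemma finite_support_in_ell2:
  assumes "\<And>k. k \<ge> n \<Longrightarrow> x k = 0"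
  shows "x \<in> ell2"
proof -
  have "summable (\<lambda>k. (x k)\<^sup>2)"
    by (rule summable_finite[of "{..<n}"]) (auto simp: not_less assms)
  then show ?thesis by (simp add: ell2_def)
qed

lemma exp_neg_le_powr:
  fixes y p :: real
  assumes y: "y > 0" and p: "0 \<le> p" "p \<le> 1"
  shows "exp (-y) \<le> y powr (-p)"
proof -
  have "y powr p \<le> max 1 y"
    using powr_mono2[of p y 1] powr_mono[of p 1 y] y p by (cases "y \<le> 1") auto
  also have "\<dots> \<le> exp y"
    using exp_ge_add_one_self[of y] y by (intro max.boundedI) linarith+
  finally show ?thesis
    using y by (simp add: powr_minus exp_minus le_imp_inverse_le)
qed

lemma powr_le_mult_exp_minus_one:
  fixes b :: real
  assumes b: "b \<ge> 1"
  shows "\<exists>K>0. \<forall>x>0. x powr b \<le> K * (exp (2 * x) - 1)"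
proof -
  define K where "K = max (1/2) (b powr b)"
  have "x powr b \<le> K * (exp (2 * x) - 1)" if x: "x > 0" for x
  proof (cases "x \<le> 1")
    case True
    have exp2: "exp (2 * x) - 1 \<ge> 2 * x" using exp_ge_add_one_self[of "2 * x"] by linarith
    have "x powr b \<le> x powr 1" using True x b by (intro powr_mono') auto
    also have "\<dots> = x" using x by simp
    also have "\<dots> \<le> 1/2 * (exp (2 * x) - 1)" using exp2 by simp
    also have "\<dots> \<le> K * (exp (2 * x) - 1)" using exp2 x by (intro mult_right_mono) (auto simp: K_def)
    finally show ?thesis .
  next
    case False
    have "ln x - ln b \<le> x / b - 1"
      using ln_le_minus_one[of "x / b"] x b by (simp add: ln_div)
    then have "b * ln x \<le> b * ln b + x"
      using b by (simp add: field_simps)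
    then have "x powr b \<le> b powr b * exp x"
      using x b by (simp add: powr_def exp_add[symmetric])
    also have "exp x \<le> exp (2 * x) - 1"
    proof -
      have "exp x \<ge> 2" using exp_ge_add_one_self[of x] False by linarith
      moreover from this have "2 * exp x \<le> exp x * exp x" by (intro mult_right_mono) auto
      moreover have "exp (2 * x) = exp x * exp x" by (metis exp_double power2_eq_square)
      ultimately show ?thesis by linarith
    qed
    then have "b powr b * exp x \<le> b powr b * (exp (2 * x) - 1)" by (intro mult_left_mono) auto
    also have "\<dots> \<le> K * (exp (2 * x) - 1)"
      using \<open>exp x \<le> exp (2 * x) - 1\<close> x by (intro mult_right_mono) (auto simp: K_def)
    finally show ?thesis .
  qed
  moreover have "K > 0" by (simp add: K_def)
  ultimately show ?thesis by blast
qed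

lemma has_integral_exp_minus_interval:
  fixes a t :: real
  assumes a: "a \<noteq> 0" and t: "t \<ge> 0"
  shows "((\<lambda>s. exp (- a * s)) has_integral ((1 - exp (- a * t)) / a)) {0..t}"
proof -
  have "((\<lambda>s. exp (- a * s)) has_integral (- exp (- a * t) / a - - exp (- a * 0) / a)) {0..t}"
  proof (rule fundamental_theorem_of_calculus[OF t])
    fix s :: real
    have "((\<lambda>s. - exp (- a * s) / a) has_real_derivative exp (- a * s)) (at s within {0..t})"
      using a by (auto intro!: derivative_eq_intros)
    then show "((\<lambda>s. - exp (- a * s) / a) has_vector_derivative exp (- a * s)) (at s within {0..t})"
      by (simp add: has_real_derivative_iff_has_vector_derivative)
  qed
  then show ?thesis by (simp add: diff_divide_distrib)
qed

lemma nn_integral_powr_bounded_finite: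
  assumes q: "q < 1" and C: "C \<ge> 0"
    and f: "\<And>s. 0 < s \<Longrightarrow> s \<le> t \<Longrightarrow> f s \<le> ennreal (C * s powr (-q))"
  shows "(\<integral>\<^sup>+ s\<in>{0<..t}. f s \<partial>lborel) < \<infinity>"
proof (cases "t > 0")
  case True
  have "((\<lambda>s. C * s powr (-q)) has_integral (C * (t powr (-q + 1) / (-q + 1)))) {0..t}"
    using has_integral_mult_right[OF has_integral_powr_from_0[of "-q" t]] q True by simp
  then have I: "(\<integral>\<^sup>+ s. ennreal (C * s powr (-q)) * indicator {0..t} s \<partial>lborel)
      = ennreal (C * (t powr (-q + 1) / (-q + 1)))"
    by (intro nn_integral_has_integral_lebesgue') (simp_all add: C)
  have "(\<integral>\<^sup>+ s\<in>{0<..t}. f s \<partial>lborel)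
      \<le> (\<integral>\<^sup>+ s. ennreal (C * s powr (-q)) * indicator {0..t} s \<partial>lborel)"
    by (intro nn_integral_mono) (auto simp: indicator_def f)
  then show ?thesis using I by (simp add: top.not_eq_extremum le_less_trans)
qed simp

lemma summable_powr_of_lower_bound:
  fixes lam :: "nat \<Rightarrow> real"
  assumes c: "c > 0" and a: "a > 0"
    and lb: "\<And>k. c * (real k + 1) powr a \<le> lam k" and qa: "q * a > 1"
  shows "summable (\<lambda>k. lam k powr (-q))"
proof -
  have q: "q > 0" using qa a by (smt (verit) mult_nonpos_nonneg)
  have "summable (\<lambda>k. real k powr (-(q * a)))"
    using summable_real_powr_iff qa by simp
  then have "summable (\<lambda>k. real (Suc k) powr (-(q * a)))"
    by (subst summable_Suc_iff)
  then have major: "summable (\<lambda>k. c powr (-q) * (real k + 1) powr (-(q * a)))"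
    by (intro summable_mult) (simp add: add.commute)
  show ?thesis
  proof (rule summable_comparison_test[OF _ major], intro exI allI impI)
    fix k :: nat
    have "lam k powr (-q) \<le> (c * (real k + 1) powr a) powr (-q)"
      using lb[of k] c q by (intro powr_mono2') auto
    also have "\<dots> = c powr (-q) * (real k + 1) powr (-(q * a))"
      using c by (simp add: powr_mult powr_powr mult.commute)
    finally show "norm (lam k powr (-q)) \<le> c powr (-q) * (real k + 1) powr (-(q * a))"
      by simp
  qed
qed

section \<open>The weighted heat trace\<close>

lemma semigrp_opG_opG_semigrp:
  assumes lam_pos: "\<And>k. lam k > 0"
  shows "semigrp lam \<beta> s \<circ> opG lam \<gamma> \<circ> opG lam \<gamma> \<circ> semigrp lam \<beta> s
    = semigrp lam \<beta> (2 * s) \<circ> negLapPow lam (-\<gamma>)"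
  unfolding semigrp_def opG_def negLapPow_def diag_comp
  by (intro arg_cong[where f = diag] ext)
    (use lam_pos in \<open>simp add: powr_add[symmetric] exp_add[symmetric] algebra_simps\<close>)

lemma traceE_heat_le:
  assumes lam_pos: "\<And>k. lam k > 0" and p: "0 \<le> p" "p \<le> 1" and s: "s > 0"
    and summ: "summable (\<lambda>k. lam k powr (-(\<gamma> + \<beta> * p)))"
  shows "traceE (semigrp lam \<beta> (2 * s) \<circ> negLapPow lam (-\<gamma>))
    \<le> ennreal ((2 * s) powr (-p) * (\<Sum>k. lam k powr (-(\<gamma> + \<beta> * p))))"
proof -
  have le: "exp (- (2 * s) * lam k powr \<beta>) * lam k powr (-\<gamma>)
      \<le> (2 * s) powr (-p) * lam k powr (-(\<gamma> + \<beta> * p))" for k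
  proof -
    have "exp (- (2 * s * lam k powr \<beta>)) \<le> (2 * s * lam k powr \<beta>) powr (-p)"
      using lam_pos[of k] s p by (intro exp_neg_le_powr) auto
    also have "\<dots> = (2 * s) powr (-p) * lam k powr (-(\<beta> * p))"
      using s lam_pos[of k] by (simp add: powr_mult powr_powr)
    finally have "exp (- (2 * s) * lam k powr \<beta>) * lam k powr (-\<gamma>)
        \<le> (2 * s) powr (-p) * lam k powr (-(\<beta> * p)) * lam k powr (-\<gamma>)"
      by (intro mult_right_mono) auto
    also have "\<dots> = (2 * s) powr (-p) * lam k powr (-(\<beta> * p) + -\<gamma>)"
      unfolding powr_add by (simp only: mult.assoc)
    also have "-(\<beta> * p) + -\<gamma> = -(\<gamma> + \<beta> * p)" by simp
    finally show ?thesis .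
  qed
  have "traceE (semigrp lam \<beta> (2 * s) \<circ> negLapPow lam (-\<gamma>))
      = (\<Sum>k. ennreal (exp (- (2 * s) * lam k powr \<beta>) * lam k powr (-\<gamma>)))"
    by (simp add: traceE_def semigrp_def negLapPow_def diag_def unitvec_def)
  also have "\<dots> \<le> (\<Sum>k. ennreal ((2 * s) powr (-p) * lam k powr (-(\<gamma> + \<beta> * p))))"
    by (intro suminf_le summableI ennreal_leI le)
  also have "\<dots> = ennreal ((2 * s) powr (-p) * (\<Sum>k. lam k powr (-(\<gamma> + \<beta> * p))))"
    using summ by (simp add: suminf_ennreal2 summable_mult suminf_mult)
  finally show ?thesis .
qed

text \<open>For the Laplacian on the m-torus, Weyl's law gives the hypothesis zeta with r = m/2.\<close>
lemma nn_integral_weighted_heat_trace_finite: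
  assumes lam_pos: "\<And>k. lam k > 0" and \<beta>: "\<beta> \<ge> 0"
    and zeta: "\<And>q. q > r \<Longrightarrow> summable (\<lambda>k. lam k powr (-q))" and cond: "r - \<gamma> < \<beta>"
  shows "\<exists>\<eta>. 0 < \<eta> \<and> \<eta> < 1 \<and> (\<forall>t>0. (\<integral>\<^sup>+ s\<in>{0<..t}. ennreal (s powr (-\<eta>)) *
      traceE (semigrp lam \<beta> (2 * s) \<circ> negLapPow lam (-\<gamma>)) \<partial>lborel) < \<infinity>)"
proof -
  \<comment> \<open>For \<beta> = 0 the quotient is 0 by convention, giving p = 1/2.\<close>
  define p where "p = max (1/2) ((1 + (r - \<gamma>) / \<beta>) / 2)"
  have "0 < p \<and> p < 1 \<and> r < \<gamma> + \<beta> * p"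
  proof (cases "\<beta> = 0")
    case True
    then show ?thesis using cond by (simp add: p_def)
  next
    case False
    then have "(r - \<gamma>) / \<beta> < 1" using \<beta> cond by (simp add: divide_less_eq)
    moreover have "\<beta> * ((1 + (r - \<gamma>) / \<beta>) / 2) = (\<beta> + (r - \<gamma>)) / 2"
      using False by (simp add: field_simps)
    moreover have "\<beta> * ((1 + (r - \<gamma>) / \<beta>) / 2) \<le> \<beta> * p"
      using \<beta> by (intro mult_left_mono) (simp_all add: p_def)
    ultimately show ?thesis using cond by (auto simp: p_def)
  qed
  then have p: "0 < p" "p < 1" "r < \<gamma> + \<beta> * p" by auto
  define S where "S = (\<Sum>k. lam k powr (-(\<gamma> + \<beta> * p)))"
  have summ: "summable (\<lambda>k. lam k powr (-(\<gamma> + \<beta> * p)))" using zeta p(3) by blast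
  then have S: "S \<ge> 0" by (simp add: S_def suminf_nonneg)
  define \<eta> where "\<eta> = (1 - p) / 2"
  have bound: "ennreal (s powr (-\<eta>)) * traceE (semigrp lam \<beta> (2 * s) \<circ> negLapPow lam (-\<gamma>))
      \<le> ennreal (2 powr (-p) * S * s powr (-(\<eta> + p)))" if s: "s > 0" for s
  proof -
    have "ennreal (s powr (-\<eta>)) * traceE (semigrp lam \<beta> (2 * s) \<circ> negLapPow lam (-\<gamma>))
        \<le> ennreal (s powr (-\<eta>)) * ennreal ((2 * s) powr (-p) * S)"
      using traceE_heat_le[OF lam_pos _ _ s summ] p by (intro mult_left_mono) (auto simp: S_def)
    also have "\<dots> = ennreal (s powr (-\<eta>) * ((2 * s) powr (-p) * S))"
      using S by (simp add: ennreal_mult)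
    also have "s powr (-\<eta>) * ((2 * s) powr (-p) * S) = 2 powr (-p) * S * s powr (-(\<eta> + p))"
      using s by (simp add: powr_mult powr_add[symmetric] algebra_simps)
    finally show ?thesis .
  qed
  have "\<eta> + p < 1" "0 < \<eta>" "\<eta> < 1" using p by (simp_all add: \<eta>_def field_simps)
  then show ?thesis
    using nn_integral_powr_bounded_finite[of "\<eta> + p" "2 powr (-p) * S", OF _ _ bound] S by auto
qed

section \<open>The smoothing estimate for Q_t\<close>

lemma Qsymb_pos:
  assumes "lam k > 0" "t > 0"
  shows "Qsymb lam \<beta> \<gamma> t k > 0"
  using assms by (simp add: Qsymb_def)

lemma Qsymb_invsqrt_exp_le:
  assumes \<beta>: "\<beta> > 0" and l: "lam k > 0" and t: "t > 0"
    and K: "\<And>x. x > 0 \<Longrightarrow> x powr (1 + \<gamma> / \<beta>) \<le> K * (exp (2 * x) - 1)"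
  shows "Qsymb lam \<beta> \<gamma> t k powr (-1/2) * exp (- t * lam k powr \<beta>)
    \<le> sqrt (2 * K) * t powr (-1/2 - \<gamma> / (2 * \<beta>))"
proof -
  define b where "b = 1 + \<gamma> / \<beta>"
  define L where "L = lam k powr \<beta>"
  define x where "x = t * L"
  define E where "E = exp (2 * x)"
  define Q where "Q = Qsymb lam \<beta> \<gamma> t k"
  have L: "L > 0" and x: "x > 0" and E: "E > 1" using l t by (simp_all add: L_def x_def E_def)
  have "lam k powr (\<beta> + \<gamma>) = L powr b"
    using \<beta> l by (simp add: L_def powr_powr b_def algebra_simps)
  moreover have "exp (-2 * t * lam k powr \<beta>) = 1 / E"
    by (simp add: E_def x_def L_def exp_minus field_simps)
  ultimately have Q_eq: "Q = (E - 1) / (2 * E * L powr b)"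
    unfolding Q_def Qsymb_def powr_minus using E L by (simp add: field_simps)
  then have Q_pos: "Q > 0" using E L by simp
  have "exp (-x) ^ 2 = exp (2 * - x)" by (rule exp_double[symmetric])
  also have "\<dots> = 1 / E" by (simp add: E_def exp_minus inverse_eq_divide)
  finally have exp_sq: "exp (-x) ^ 2 = 1 / E" .
  have "(Q powr (-1/2) * exp (- t * lam k powr \<beta>))\<^sup>2 = (Q powr (-1/2))\<^sup>2 * exp (-x) ^ 2"
    by (simp add: power_mult_distrib x_def L_def)
  also have "\<dots> = 1 / Q * (1 / E)"
    using Q_pos by (simp add: powr_power exp_sq)
  also have "\<dots> = 2 * L powr b / (E - 1)"
    using E L by (simp add: Q_eq field_simps)
  also have "\<dots> = 2 * x powr b * t powr (-b) / (E - 1)"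
    using t L by (simp add: x_def powr_mult powr_minus)
  also have "\<dots> \<le> 2 * (K * (E - 1)) * t powr (-b) / (E - 1)"
    using K[OF x] E by (intro divide_right_mono mult_right_mono) (auto simp: b_def E_def)
  also have "\<dots> = 2 * K * t powr (-b)" using E by simp
  finally have "Q powr (-1/2) * exp (- t * lam k powr \<beta>) \<le> sqrt (2 * K * t powr (-b))"
    by (rule real_le_rsqrt)
  also have "\<dots> = sqrt (2 * K) * t powr (-b / 2)"
    using t powr_half_sqrt_powr[of t "-b"] by (simp add: real_sqrt_mult)
  also have "-b / 2 = -1/2 - \<gamma> / (2 * \<beta>)"
    using \<beta> by (simp add: b_def field_simps)
  finally show ?thesis by (simp add: Q_def)
qed

lemma Qsymb_invsqrt_exp_bound:
  assumes \<beta>: "\<beta> > 0" and \<gamma>: "\<gamma> \<ge> 0" and lam_pos: "\<And>k. lam k > 0"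
  shows "\<exists>C>0. \<forall>t>0. \<forall>k. Qsymb lam \<beta> \<gamma> t k powr (-1/2) * exp (- t * lam k powr \<beta>)
    \<le> C * t powr (-1/2 - \<gamma> / (2 * \<beta>))"
proof -
  obtain K where K: "K > 0" "\<And>x. x > 0 \<Longrightarrow> x powr (1 + \<gamma> / \<beta>) \<le> K * (exp (2 * x) - 1)"
    using powr_le_mult_exp_minus_one[of "1 + \<gamma> / \<beta>"] \<beta> \<gamma> by auto
  have "Qsymb lam \<beta> \<gamma> t k powr (-1/2) * exp (- t * lam k powr \<beta>)
      \<le> sqrt (2 * K) * t powr (-1/2 - \<gamma> / (2 * \<beta>))" if "t > 0" for t k
    using Qsymb_invsqrt_exp_le[where \<gamma> = \<gamma> and lam = lam and k = k, OF \<beta> lam_pos[of k] that K(2)] .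
  then show ?thesis using K(1) by (intro exI[of _ "sqrt (2 * K)"]) auto
qed

lemma opnorm_Qt_invsqrt_semigrp_le:
  assumes \<beta>: "\<beta> > 0" and \<gamma>: "\<gamma> \<ge> 0" and lam_pos: "\<And>k. lam k > 0"
  shows "\<exists>c>0. \<forall>t>0. opnorm (Qt_invsqrt lam \<beta> \<gamma> t \<circ> semigrp lam \<beta> t)
    \<le> ennreal (c * t powr (-1/2 - \<gamma> / (2 * \<beta>)))"
proof -
  obtain C where C: "C > 0" and bound: "\<forall>t>0. \<forall>k.
      Qsymb lam \<beta> \<gamma> t k powr (-1/2) * exp (- t * lam k powr \<beta>) \<le> C * t powr (-1/2 - \<gamma> / (2 * \<beta>))"
    using Qsymb_invsqrt_exp_bound[where lam = lam, OF \<beta> \<gamma> lam_pos] by blast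
  show ?thesis
  proof (intro exI[of _ C] conjI allI impI)
    fix t :: real assume t: "t > 0"
    show "opnorm (Qt_invsqrt lam \<beta> \<gamma> t \<circ> semigrp lam \<beta> t)
        \<le> ennreal (C * t powr (-1/2 - \<gamma> / (2 * \<beta>)))"
      unfolding Qt_invsqrt_def semigrp_def diag_comp
    proof (rule opnorm_diag_le)
      show "0 \<le> C * t powr (-1/2 - \<gamma> / (2 * \<beta>))" using C by simp
      show "\<bar>Qsymb lam \<beta> \<gamma> t k powr (-1/2) * exp (- t * lam k powr \<beta>)\<bar>
          \<le> C * t powr (-1/2 - \<gamma> / (2 * \<beta>))" for k
        using bound t by simp
    qed
  qed (rule C)
qed

section \<open>Galerkin approximation\<close>

lemma Hn_subset_domA: "Hn n \<subseteq> domA lam \<beta>"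
  by (auto simp: Hn_def domA_def opA_def diag_def intro!: finite_support_in_ell2[of n])

lemma opA_Hn_Suc_diff:
  assumes lam_pos: "\<And>k. lam k > 0"
  shows "opA lam \<beta> ` (Hn (Suc n) - Hn n) \<subseteq> Hn (Suc n) - Hn n"
proof
  fix z assume "z \<in> opA lam \<beta> ` (Hn (Suc n) - Hn n)"
  then obtain x where x: "x \<in> Hn (Suc n)" "x \<notin> Hn n" and z: "z = opA lam \<beta> x" by auto
  have zk: "z k = - (lam k powr \<beta>) * x k" for k by (simp add: z opA_def diag_def)
  obtain k where "k \<ge> n" "x k \<noteq> 0" using x by (auto simp: Hn_def)
  then have "z \<notin> Hn n" using lam_pos[of k] by (auto simp: Hn_def zk)
  moreover have "z \<in> Hn (Suc n)"
    using x(1) by (auto simp: Hn_def zk intro!: finite_support_in_ell2[of "Suc n"])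
  ultimately show "z \<in> Hn (Suc n) - Hn n" by simp
qed

lemma Hn_dense:
  assumes x: "x \<in> ell2" and \<epsilon>: "\<epsilon> > 0"
  shows "\<exists>n. \<exists>y\<in>Hn n. l2norm (\<lambda>k. x k - y k) < \<epsilon>"
proof -
  define f where "f = (\<lambda>k. (x k)\<^sup>2)"
  have f: "summable f" using x by (simp add: ell2_def f_def)
  have "(\<lambda>n. \<Sum>k. f (k + n)) \<longlonglongrightarrow> 0"
    using suminf_exist_split2[OF f] by simp
  then have "eventually (\<lambda>n. (\<Sum>k. f (k + n)) < \<epsilon>\<^sup>2) sequentially"
    using \<epsilon> by (intro order_tendstoD(2)) auto
  then obtain n where n: "(\<Sum>k. f (k + n)) < \<epsilon>\<^sup>2"
    by (auto simp: eventually_sequentially)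
  define g where "g = (\<lambda>k. (x k - proj n x k)\<^sup>2)"
  have g: "g = (\<lambda>k. if k < n then 0 else f k)" by (auto simp: g_def f_def proj_def)
  have "summable g"
    unfolding g by (rule summable_comparison_test[OF _ f]) (auto simp: f_def)
  then have "(\<Sum>k. g k) = (\<Sum>k. g (k + n)) + (\<Sum>i<n. g i)"
    by (rule suminf_split_initial_segment)
  then have "(\<Sum>k. g k) = (\<Sum>k. f (k + n))"
    by (simp add: g)
  then have "l2norm (\<lambda>k. x k - proj n x k) < \<epsilon>"
    using n \<epsilon> real_sqrt_less_mono[of "\<Sum>k. g k" "\<epsilon>\<^sup>2"] by (simp add: l2norm_def g_def)
  moreover have "proj n x \<in> Hn n"
    by (auto simp: Hn_def proj_def intro!: finite_support_in_ell2[of n])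
  ultimately show ?thesis by blast
qed

lemma Qtn_apply:
  assumes lam_pos: "\<And>k. lam k > 0" and t: "t \<ge> 0"
  shows "Qtn lam \<beta> \<gamma> n t x k = (if k < n then Qsymb lam \<beta> \<gamma> t k * x k else 0)"
proof -
  define L where "L = lam k powr \<beta>"
  have L: "L > 0" using lam_pos[of k] by (simp add: L_def)
  define c where "c = (if k < n then lam k powr (-\<gamma>) * x k else 0)"
  have integrand: "(semigrp_n lam \<beta> n s \<circ> opGn lam \<gamma> n \<circ> opGn_adj lam \<gamma> n \<circ> semigrp_n lam \<beta> n s) x k
      = c * exp (- (2 * L) * s)" for s
    using lam_pos[of k]
    by (simp add: c_def L_def semigrp_n_def opGn_def opGn_adj_def opG_def negLapPow_def proj_def
        diag_def powr_add[symmetric] exp_add[symmetric] algebra_simps)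
  have "Qtn lam \<beta> \<gamma> n t x k = c * ((1 - exp (- (2 * L) * t)) / (2 * L))"
    unfolding Qtn_def integrand
    using has_integral_exp_minus_interval[of "2 * L" t] L t
    by (intro integral_unique has_integral_mult_right) auto
  also have "\<dots> = (if k < n then Qsymb lam \<beta> \<gamma> t k * x k else 0)"
    unfolding Qsymb_def minus_add_distrib powr_add
    using lam_pos[of k] by (simp add: c_def L_def powr_minus field_simps)
  finally show ?thesis .
qed

lemma Qtn_kernel_trivial:
  assumes lam_pos: "\<And>k. lam k > 0" and t: "t > 0"
    and x: "x \<in> Hn n" and Q: "Qtn lam \<beta> \<gamma> n t x = (\<lambda>k. 0)"
  shows "x = (\<lambda>k. 0)"
proof
  fix k
  show "x k = 0"
  proof (cases "k < n")
    case True
    then have "Qsymb lam \<beta> \<gamma> t k * x k = 0"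
      using Qtn_apply[where lam = lam and \<beta> = \<beta> and \<gamma> = \<gamma> and t = t and n = n and x = x and k = k,
          OF lam_pos] fun_cong[OF Q, of k] t
      by simp
    then show ?thesis
      using Qsymb_pos[where lam = lam and k = k and \<beta> = \<beta> and \<gamma> = \<gamma>, OF lam_pos t] by simp
  qed (use x in \<open>simp add: Hn_def\<close>)
qed

lemma Qtn_invsqrt_semigrp_n_eq:
  assumes lam_pos: "\<And>k. lam k > 0" and t: "t \<ge> 0"
  shows "Qtn_invsqrt lam \<beta> \<gamma> n t \<circ> semigrp_n lam \<beta> n t
    = diag (\<lambda>k. if k < n then Qsymb lam \<beta> \<gamma> t k powr (-1/2) * exp (- t * lam k powr \<beta>) else 0)"
  unfolding Qtn_invsqrt_def semigrp_n_def diag_comp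
  by (intro arg_cong[where f = diag] ext)
    (simp add: Qtn_apply[where lam = lam, OF lam_pos t] unitvec_def)

lemma SUP_nn_integral_opnorm_Qtn_finite:
  assumes \<beta>: "\<beta> > 0" and \<gamma>: "\<gamma> \<ge> 0" and lam_pos: "\<And>k. lam k > 0"
    and p: "p > 0" and integrable: "(1/2 + \<gamma> / (2 * \<beta>)) * p < 1"
  shows "(SUP n. \<integral>\<^sup>+ s\<in>{0<..t}.
    ennpowr (opnorm (Qtn_invsqrt lam \<beta> \<gamma> n s \<circ> semigrp_n lam \<beta> n s)) p \<partial>lborel) < \<infinity>"
proof -
  define a where "a = 1/2 + \<gamma> / (2 * \<beta>)"
  obtain C where C: "C > 0" and bound: "\<And>s k. s > 0 \<Longrightarrow>
      Qsymb lam \<beta> \<gamma> s k powr (-1/2) * exp (- s * lam k powr \<beta>) \<le> C * s powr (- a)"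
    using Qsymb_invsqrt_exp_bound[where lam = lam, OF \<beta> \<gamma> lam_pos] by (auto simp: a_def)
  have opnorm_le: "ennpowr (opnorm (Qtn_invsqrt lam \<beta> \<gamma> n s \<circ> semigrp_n lam \<beta> n s)) p
      \<le> ennreal (C powr p * s powr (- (a * p)))" if s: "s > 0" for n s
  proof -
    have "opnorm (Qtn_invsqrt lam \<beta> \<gamma> n s \<circ> semigrp_n lam \<beta> n s) \<le> ennreal (C * s powr (- a))"
      unfolding Qtn_invsqrt_semigrp_n_eq[where lam = lam, OF lam_pos less_imp_le[OF s]]
      using C bound[OF s] by (intro opnorm_diag_le) auto
    then have "ennpowr (opnorm (Qtn_invsqrt lam \<beta> \<gamma> n s \<circ> semigrp_n lam \<beta> n s)) p
        \<le> ennreal ((C * s powr (- a)) powr p)"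
      using C p by (intro ennpowr_le_ennreal) auto
    also have "(C * s powr (- a)) powr p = C powr p * s powr (- (a * p))"
      using C s by (simp add: powr_mult powr_powr)
    finally show ?thesis .
  qed
  have "(SUP n. \<integral>\<^sup>+ s\<in>{0<..t}.
      ennpowr (opnorm (Qtn_invsqrt lam \<beta> \<gamma> n s \<circ> semigrp_n lam \<beta> n s)) p \<partial>lborel)
      \<le> (\<integral>\<^sup>+ s\<in>{0<..t}. ennreal (C powr p * s powr (- (a * p))) \<partial>lborel)"
    using opnorm_le
    by (intro SUP_least nn_integral_mono) (auto simp: indicator_def)
  also have "\<dots> < \<infinity>"
    using integrable
    by (intro nn_integral_powr_bounded_finite[where C = "C powr p" and q = "a * p"]) (auto simp: a_def)
  finally show ?thesis .
qed

lemma Galerkin_exponent_conditions: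
  fixes \<beta> \<gamma> \<theta> :: real
  assumes \<gamma>: "\<gamma> \<ge> 0" and \<theta>: "0 < \<theta>" "\<theta> < 1" and small: "\<gamma> < \<beta> * \<theta> / (2 - \<theta>)"
  shows "\<beta> > 0" and "(1/2 + \<gamma> / (2 * \<beta>)) * (2 - \<theta>) < 1"
proof -
  have "\<gamma> * (2 - \<theta>) < \<beta> * \<theta>" using small \<theta> by (simp add: field_simps)
  moreover have "\<gamma> * (2 - \<theta>) \<ge> 0" using \<gamma> \<theta> by simp
  ultimately show \<beta>: "\<beta> > 0" using \<theta> by (smt (verit) mult_nonpos_nonneg)
  show "(1/2 + \<gamma> / (2 * \<beta>)) * (2 - \<theta>) < 1"
    using \<open>\<gamma> * (2 - \<theta>) < \<beta> * \<theta>\<close> \<beta> by (simp add: field_simps)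
qed

theorem proposition5p13:
  fixes lam :: "nat \<Rightarrow> real" and m :: nat and \<beta> \<gamma> \<theta> :: real
  assumes m: "m \<in> {1, 2, 3}"
    and lam_pos: "\<And>k. lam k > 0"
    and lam_asymp: "\<exists>c1 c2. c1 > 0 \<and> c2 > 0 \<and>
        (\<forall>k. c1 * (real k + 1) powr (2 / real m) \<le> lam k \<and> lam k \<le> c2 * (real k + 1) powr (2 / real m))"
    and \<beta>: "\<beta> \<ge> 0" and \<gamma>: "\<gamma> \<ge> 0" and \<theta>: "0 < \<theta>" "\<theta> < 1"
  shows
    "(real m - 2 * \<gamma> < 2 * \<beta> \<longrightarrow>
       (\<exists>\<eta>>0. \<forall>t>0. (\<integral>\<^sup>+ s\<in>{0<..t}. ennreal (s powr (-\<eta>)) *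
           traceE (semigrp lam \<beta> (2 * s) \<circ> negLapPow lam (-\<gamma>)) \<partial>lborel) < \<infinity>))
   \<and> (\<beta> > 0 \<longrightarrow>
       (\<exists>c>0. \<forall>n t. t > 0 \<longrightarrow>
          opnorm (proj n \<circ> Qt_invsqrt lam \<beta> \<gamma> t \<circ> semigrp lam \<beta> t \<circ> proj n)
            \<le> opnorm (Qt_invsqrt lam \<beta> \<gamma> t \<circ> semigrp lam \<beta> t)
        \<and> opnorm (Qt_invsqrt lam \<beta> \<gamma> t \<circ> semigrp lam \<beta> t)
            \<le> ennreal (c * t powr (-1/2 - \<gamma> / (2 * \<beta>)))))
   \<and> ((real m - 2 * \<beta>) / 2 < \<gamma> \<and> \<gamma> < \<beta> * \<theta> / (2 - \<theta>) \<longrightarrow>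
       (\<exists>\<eta>. 0 < \<eta> \<and> \<eta> < 1 \<and> (\<forall>t>0. (\<integral>\<^sup>+ s\<in>{0<..t}. ennreal (s powr (-\<eta>)) *
           traceE (semigrp lam \<beta> s \<circ> opG lam \<gamma> \<circ> opG lam \<gamma> \<circ> semigrp lam \<beta> s) \<partial>lborel) < \<infinity>))
     \<and> (\<forall>n. Hn n \<subseteq> domA lam \<beta>)
     \<and> (\<forall>n. Hn n \<subseteq> Hn (Suc n))
     \<and> (\<forall>x\<in>ell2. \<forall>\<epsilon>>0. \<exists>n. \<exists>y\<in>Hn n. l2norm (\<lambda>k. x k - y k) < \<epsilon>)
     \<and> (\<forall>n. opA lam \<beta> ` (Hn (Suc n) - Hn n) \<subseteq> (Hn (Suc n) - Hn n) \<union> {\<lambda>k. 0})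
     \<and> (\<forall>t>0. \<forall>n. \<forall>x\<in>Hn n. Qtn lam \<beta> \<gamma> n t x = (\<lambda>k. 0) \<longrightarrow> x = (\<lambda>k. 0))
     \<and> (\<forall>t>0. (SUP n. \<integral>\<^sup>+ s\<in>{0<..t}.
           ennpowr (opnorm (Qtn_invsqrt lam \<beta> \<gamma> n s \<circ> semigrp_n lam \<beta> n s)) (2 - \<theta>) \<partial>lborel) < \<infinity>))"
proof -
  obtain c1 where c1: "c1 > 0" and lb: "\<And>k. c1 * (real k + 1) powr (2 / real m) \<le> lam k"
    using lam_asymp by blast
  have m0: "real m > 0" using m by auto
  have zeta: "summable (\<lambda>k. lam k powr (-q))" if "q > real m / 2" for q
    using that m0 by (intro summable_powr_of_lower_bound[OF c1 _ lb]) (auto simp: field_simps)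
  have trace: "\<exists>\<eta>. 0 < \<eta> \<and> \<eta> < 1 \<and> (\<forall>t>0. (\<integral>\<^sup>+ s\<in>{0<..t}. ennreal (s powr (-\<eta>)) *
      traceE (semigrp lam \<beta> (2 * s) \<circ> negLapPow lam (-\<gamma>)) \<partial>lborel) < \<infinity>)"
    if "real m - 2 * \<gamma> < 2 * \<beta>"
    using nn_integral_weighted_heat_trace_finite[where lam = lam and r = "real m / 2", OF lam_pos \<beta> zeta]
      that by simp
  have Galerkin: "(SUP n. \<integral>\<^sup>+ s\<in>{0<..t}.
      ennpowr (opnorm (Qtn_invsqrt lam \<beta> \<gamma> n s \<circ> semigrp_n lam \<beta> n s)) (2 - \<theta>) \<partial>lborel) < \<infinity>"
    if small: "\<gamma> < \<beta> * \<theta> / (2 - \<theta>)" for t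
    using SUP_nn_integral_opnorm_Qtn_finite[where lam = lam, OF _ \<gamma> lam_pos]
      Galerkin_exponent_conditions[OF \<gamma> \<theta> small] \<theta> by simp
  have compress: "opnorm (proj n \<circ> Qt_invsqrt lam \<beta> \<gamma> t \<circ> semigrp lam \<beta> t \<circ> proj n)
      \<le> opnorm (Qt_invsqrt lam \<beta> \<gamma> t \<circ> semigrp lam \<beta> t)" for n t
    using opnorm_compress_le[of n "Qt_invsqrt lam \<beta> \<gamma> t \<circ> semigrp lam \<beta> t"] by (simp add: o_assoc)
  show ?thesis
    apply (intro conjI impI)
    subgoal using trace by blast
    subgoal using opnorm_Qt_invsqrt_semigrp_le[where lam = lam, OF _ \<gamma> lam_pos] by (simp add: compress)
    subgoal using trace by (auto simp: semigrp_opG_opG_semigrp[where lam = lam, OF lam_pos])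
    subgoal by (simp add: Hn_subset_domA)
    subgoal by (auto simp: Hn_def)
    subgoal using Hn_dense by blast
    subgoal using opA_Hn_Suc_diff[where lam = lam, OF lam_pos] by (simp add: subset_insertI2)
    subgoal using Qtn_kernel_trivial[where lam = lam, OF lam_pos] by blast
    subgoal using Galerkin by blast
    done
qed

end
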